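(* Let $G=(V,E)$ be a (finite or infinite) graph without isolated edge, and let $L=\{L_v:v\in V\}\cup\{L_e:e\in E\}$ be a set of lists of weights for $G$. For a subgraph $H$ of $G$, let $L_H$ denote the restriction of $L$ to $V(H)\cup E(H)$, i.e. $L_H=\{L_v:v\in V(H)\}\cup\{L_e:e\in E(H)\}$. If every finite induced subgraph $H$ of $G$ that is not isomorphic to $K_2$ has an $L_H$-weighting, then $G$ has an $L$-weighting.
   Context: Graphs are simple and may be infinite; an isolated edge is a connected component isomorphic to $K_2$. Each list is a finite subset of $\{1,\dots,k\}$ for some natural number $k$. For a graph $F$ and a set of lists $M=\{M_v:v\in V(F)\}\cup\{M_e:e\in E(F)\}$, a weighting of $F$ from $M$ is a function $\omega\colon V(F)\cup E(F)\to\mathbb{Z}_{>0}$ with $\omega(v)\in M_v$ and $\omega(e)\in M_e$ for all vertices $v$ and edges $e$ of $F$. The weighted degree of a vertex $v$ in $F$ is $s_\omega(v)=\sum_{w\in N_F(v)}\omega(vw)+\omega(v)$; if $v$ has infinite degree $\kappa$ in $F$ this sum is the cardinal $\kappa$. An $M$-weighting of $F$ is a weighting $\omega$ of $F$ from $M$ such that for every edge $uv$ of $F$, either $s_\omega(u)\neq s_\omega(v)$, or $u$ and $v$ have the same infinite degree in $F$. *)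

theory Defs
  imports Main "HOL-Library.Equipollence"
begin

(* A simple (possibly infinite) graph: vertex set V, symmetric irreflexive
   adjacency relation E on V. Edges are identified with doubletons {u,v}. *)
definition simple_graph :: "'a set \<Rightarrow> ('a \<Rightarrow> 'a \<Rightarrow> bool) \<Rightarrow> bool" where
  "simple_graph V E \<longleftrightarrow> (\<forall>u v. E u v \<longrightarrow> u \<in> V \<and> v \<in> V \<and> u \<noteq> v \<and> E v u)"

definition nbhd :: "'a set \<Rightarrow> ('a \<Rightarrow> 'a \<Rightarrow> bool) \<Rightarrow> 'a \<Rightarrow> 'a set" where
  "nbhd V E v = {w \<in> V. E v w}"

definition induced :: "('a \<Rightarrow> 'a \<Rightarrow> bool) \<Rightarrow> 'a set \<Rightarrow> 'a \<Rightarrow> 'a \<Rightarrow> bool" where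
  "induced E S = (\<lambda>u v. E u v \<and> u \<in> S \<and> v \<in> S)"

definition is_K2 :: "'a set \<Rightarrow> ('a \<Rightarrow> 'a \<Rightarrow> bool) \<Rightarrow> bool" where
  "is_K2 V E \<longleftrightarrow> (\<exists>u v. u \<noteq> v \<and> V = {u, v} \<and> E u v)"

definition has_isolated_edge :: "'a set \<Rightarrow> ('a \<Rightarrow> 'a \<Rightarrow> bool) \<Rightarrow> bool" where
  "has_isolated_edge V E \<longleftrightarrow> (\<exists>u v. E u v \<and> nbhd V E u = {v} \<and> nbhd V E v = {u})"

definition weighting_from ::
  "'a set \<Rightarrow> ('a \<Rightarrow> 'a \<Rightarrow> bool) \<Rightarrow> ('a \<Rightarrow> nat set) \<Rightarrow> ('a set \<Rightarrow> nat set)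
   \<Rightarrow> ('a \<Rightarrow> nat) \<Rightarrow> ('a set \<Rightarrow> nat) \<Rightarrow> bool" where
  "weighting_from V E Lv Le wv we \<longleftrightarrow>
     (\<forall>v \<in> V. wv v \<in> Lv v \<and> wv v > 0) \<and>
     (\<forall>u v. E u v \<longrightarrow> we {u, v} \<in> Le {u, v} \<and> we {u, v} > 0)"

(* weighted degree of a vertex of finite degree *)
definition wdeg :: "'a set \<Rightarrow> ('a \<Rightarrow> 'a \<Rightarrow> bool) \<Rightarrow> ('a \<Rightarrow> nat) \<Rightarrow> ('a set \<Rightarrow> nat) \<Rightarrow> 'a \<Rightarrow> nat" where
  "wdeg V E wv we v = (\<Sum>w \<in> nbhd V E v. we {v, w}) + wv v"

(* s(u) = s(v), where s is the natural number wdeg for vertices of finite degree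
   and the cardinal |N(v)| for vertices of infinite degree *)
definition same_wdeg :: "'a set \<Rightarrow> ('a \<Rightarrow> 'a \<Rightarrow> bool) \<Rightarrow> ('a \<Rightarrow> nat) \<Rightarrow> ('a set \<Rightarrow> nat) \<Rightarrow> 'a \<Rightarrow> 'a \<Rightarrow> bool" where
  "same_wdeg V E wv we u v \<longleftrightarrow>
     (finite (nbhd V E u) \<and> finite (nbhd V E v) \<and> wdeg V E wv we u = wdeg V E wv we v) \<or>
     (infinite (nbhd V E u) \<and> infinite (nbhd V E v) \<and> nbhd V E u \<approx> nbhd V E v)"

definition M_weighting ::
  "'a set \<Rightarrow> ('a \<Rightarrow> 'a \<Rightarrow> bool) \<Rightarrow> ('a \<Rightarrow> nat set) \<Rightarrow> ('a set \<Rightarrow> nat set)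
   \<Rightarrow> ('a \<Rightarrow> nat) \<Rightarrow> ('a set \<Rightarrow> nat) \<Rightarrow> bool" where
  "M_weighting V E Lv Le wv we \<longleftrightarrow> weighting_from V E Lv Le wv we \<and>
     (\<forall>u v. E u v \<longrightarrow>
        \<not> same_wdeg V E wv we u v \<or>
        (infinite (nbhd V E u) \<and> infinite (nbhd V E v) \<and> nbhd V E u \<approx> nbhd V E v))"

end

(* Weightings are encoded as points x of the product space of the finite discrete spaces {..k}
   indexed by vertices (Inl v) and edges (Inr e), which is compact by Tychonoff's theorem.
   For a finite vertex set T, the condition "x is an M-weighting locally on T" depends only on
   finitely many coordinates, so it defines a closed set.  These closed sets have the finite
   intersection property: for finitely many T, enlarge their union by the neighbourhoods of its
   vertices of finite degree and, if the result induces K_2, by one more vertex (possible since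
   there is no isolated edge); the weighting of this finite induced subgraph given by hypothesis
   satisfies all the local conditions.  A point in the intersection of all these closed sets is an
   M-weighting of the whole graph. *)

theory Submission
  imports Defs "HOL-Analysis.Function_Topology"
begin

definition determined_by :: "'i set \<Rightarrow> (('i \<Rightarrow> 'b) \<Rightarrow> bool) \<Rightarrow> bool" where
  "determined_by K Q \<longleftrightarrow> (\<forall>x y. (\<forall>i\<in>K. x i = y i) \<longrightarrow> Q x = Q y)"

lemma determined_byD: "determined_by K Q \<Longrightarrow> (\<And>i. i \<in> K \<Longrightarrow> x i = y i) \<Longrightarrow> Q x = Q y"
  unfolding determined_by_def by blast

lemma openin_product_discrete_determined:
  assumes "finite K" and "determined_by K Q"
  shows "openin (product_topology (\<lambda>i. discrete_topology (A i)) UNIV) {x. (\<forall>i. x i \<in> A i) \<and> Q x}"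
proof (subst openin_subopen, intro ballI)
  fix x assume x: "x \<in> {x. (\<forall>i. x i \<in> A i) \<and> Q x}"
  define cyl where "cyl = Pi\<^sub>E UNIV (\<lambda>i. if i \<in> K then {x i} else A i)"
  have "openin (product_topology (\<lambda>i. discrete_topology (A i)) UNIV) cyl"
    unfolding cyl_def openin_PiE_gen using x \<open>finite K\<close>
    by (auto intro: finite_subset[of _ K])
  moreover have "x \<in> cyl"
    using x by (simp add: cyl_def PiE_UNIV_domain)
  moreover have "cyl \<subseteq> {x. (\<forall>i. x i \<in> A i) \<and> Q x}"
  proof
    fix y assume "y \<in> cyl"
    then have y: "y i \<in> (if i \<in> K then {x i} else A i)" for i
      unfolding cyl_def by (rule PiE_mem) simp
    then have "y i = x i" if "i \<in> K" for i
      using that by (metis singletonD)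
    then have "Q y"
      using x determined_byD[OF \<open>determined_by K Q\<close>, of y x] by simp
    moreover have "y i \<in> A i" for i
      using x y[of i] \<open>\<And>i. i \<in> K \<Longrightarrow> y i = x i\<close> by (cases "i \<in> K") auto
    ultimately show "y \<in> {x. (\<forall>i. x i \<in> A i) \<and> Q x}"
      by blast
  qed
  ultimately show "\<exists>T. openin (product_topology (\<lambda>i. discrete_topology (A i)) UNIV) T \<and>
      x \<in> T \<and> T \<subseteq> {x. (\<forall>i. x i \<in> A i) \<and> Q x}"
    by blast
qed

lemma closedin_product_discrete_determined:
  assumes "finite K" and "determined_by K Q"
  shows "closedin (product_topology (\<lambda>i. discrete_topology (A i)) UNIV) {x. (\<forall>i. x i \<in> A i) \<and> Q x}"
proof -
  have "determined_by K (\<lambda>x. \<not> Q x)"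
    using assms(2) unfolding determined_by_def by blast
  then have "openin (product_topology (\<lambda>i. discrete_topology (A i)) UNIV)
      {x. (\<forall>i. x i \<in> A i) \<and> \<not> Q x}"
    by (rule openin_product_discrete_determined[OF assms(1)])
  moreover have "topspace (product_topology (\<lambda>i. discrete_topology (A i)) UNIV) = {x. \<forall>i. x i \<in> A i}"
    by (simp add: PiE_UNIV_domain Pi_def)
  moreover have "{x. \<forall>i. x i \<in> A i} - {x. (\<forall>i. x i \<in> A i) \<and> Q x} = {x. (\<forall>i. x i \<in> A i) \<and> \<not> Q x}"
    by blast
  ultimately show ?thesis
    unfolding closedin_def by auto
qed

lemma finite_domain_constraints_compactness:
  fixes A :: "'i \<Rightarrow> 'b set" and C :: "'j \<Rightarrow> ('i \<Rightarrow> 'b) \<Rightarrow> bool"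
  assumes "\<And>i. finite (A i)"
    and "\<And>j. j \<in> J \<Longrightarrow> \<exists>K. finite K \<and> determined_by K (C j)"
    and "\<And>F. finite F \<Longrightarrow> F \<subseteq> J \<Longrightarrow> \<exists>x. (\<forall>i. x i \<in> A i) \<and> (\<forall>j\<in>F. C j x)"
  shows "\<exists>x. (\<forall>i. x i \<in> A i) \<and> (\<forall>j\<in>J. C j x)"
proof (cases "J = {}")
  case True
  then show ?thesis
    using assms(3)[of "{}"] by simp
next
  case False
  let ?X = "product_topology (\<lambda>i. discrete_topology (A i)) UNIV"
  let ?U = "(\<lambda>j. {x. (\<forall>i. x i \<in> A i) \<and> C j x}) ` J"
  have compact: "compact_space ?X"
    by (simp add: compact_space_product_topology compact_space_discrete_topology assms(1))
  have closed: "\<forall>S\<in>?U. closedin ?X S"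
  proof
    fix S assume "S \<in> ?U"
    then obtain j where "j \<in> J" "S = {x. (\<forall>i. x i \<in> A i) \<and> C j x}"
      by blast
    moreover obtain K where "finite K" "determined_by K (C j)"
      using assms(2) \<open>j \<in> J\<close> by blast
    ultimately show "closedin ?X S"
      using closedin_product_discrete_determined by blast
  qed
  have fip: "\<forall>\<F>. finite \<F> \<and> \<F> \<subseteq> ?U \<longrightarrow> \<Inter>\<F> \<noteq> {}"
  proof (intro allI impI)
    fix \<F> assume "finite \<F> \<and> \<F> \<subseteq> ?U"
    then have "\<exists>F\<subseteq>J. finite F \<and> \<F> = (\<lambda>j. {x. (\<forall>i. x i \<in> A i) \<and> C j x}) ` F"
      by (intro finite_subset_image) simp_all
    then obtain F where F: "F \<subseteq> J" "finite F" "\<F> = (\<lambda>j. {x. (\<forall>i. x i \<in> A i) \<and> C j x}) ` F"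
      by blast
    then obtain x where "\<forall>i. x i \<in> A i" "\<forall>j\<in>F. C j x"
      using assms(3) by blast
    then have "x \<in> \<Inter>\<F>"
      using F(3) by blast
    then show "\<Inter>\<F> \<noteq> {}"
      by blast
  qed
  have "\<Inter>?U \<noteq> {}"
    by (rule compact_space_fip[THEN iffD1, OF compact, rule_format]) (use closed fip in blast)
  then obtain x where "x \<in> \<Inter>?U"
    by blast
  then show ?thesis
    using False by blast
qed

definition fin_closed_nbhd :: "'a set \<Rightarrow> ('a \<Rightarrow> 'a \<Rightarrow> bool) \<Rightarrow> 'a set \<Rightarrow> 'a set" where
  "fin_closed_nbhd V E T = T \<union> \<Union>{nbhd V E v | v. v \<in> T \<and> finite (nbhd V E v)}"

(* An edge with an endpoint of infinite degree never violates the M-weighting condition, so only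
   edges between vertices of finite degree constrain the weighted degrees. *)
definition M_weighting_on ::
  "'a set \<Rightarrow> ('a \<Rightarrow> 'a \<Rightarrow> bool) \<Rightarrow> ('a \<Rightarrow> nat set) \<Rightarrow> ('a set \<Rightarrow> nat set) \<Rightarrow> 'a set
   \<Rightarrow> ('a \<Rightarrow> nat) \<Rightarrow> ('a set \<Rightarrow> nat) \<Rightarrow> bool" where
  "M_weighting_on V E Lv Le T wv we \<longleftrightarrow>
     (\<forall>v\<in>T. wv v \<in> Lv v) \<and>
     (\<forall>u v. u \<in> T \<and> v \<in> T \<and> E u v \<longrightarrow> we {u, v} \<in> Le {u, v}) \<and>
     (\<forall>u v. u \<in> T \<and> v \<in> T \<and> E u v \<and> finite (nbhd V E u) \<and> finite (nbhd V E v) \<longrightarrow>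
        wdeg V E wv we u \<noteq> wdeg V E wv we v)"

lemma finite_fin_closed_nbhd: "finite T \<Longrightarrow> finite (fin_closed_nbhd V E T)"
  unfolding fin_closed_nbhd_def by auto

lemma fin_closed_nbhd_subset: "T \<subseteq> V \<Longrightarrow> fin_closed_nbhd V E T \<subseteq> V"
  unfolding fin_closed_nbhd_def nbhd_def by auto

lemma subset_fin_closed_nbhd: "T \<subseteq> fin_closed_nbhd V E T"
  unfolding fin_closed_nbhd_def by auto

lemma nbhd_subset_fin_closed_nbhd:
  "v \<in> T \<Longrightarrow> finite (nbhd V E v) \<Longrightarrow> nbhd V E v \<subseteq> fin_closed_nbhd V E T"
  unfolding fin_closed_nbhd_def by auto

lemma wdeg_cong:
  assumes "wv v = wv' v" and "\<And>w. w \<in> nbhd V E v \<Longrightarrow> we {v, w} = we' {v, w}"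
  shows "wdeg V E wv we v = wdeg V E wv' we' v"
  unfolding wdeg_def using assms by (metis (no_types, lifting) sum.cong)

lemma M_weighting_on_mono:
  "T \<subseteq> T' \<Longrightarrow> M_weighting_on V E Lv Le T' wv we \<Longrightarrow> M_weighting_on V E Lv Le T wv we"
  unfolding M_weighting_on_def by blast

definition M_weighting_on_coords :: "'a set \<Rightarrow> ('a \<Rightarrow> 'a \<Rightarrow> bool) \<Rightarrow> 'a set \<Rightarrow> ('a + 'a set) set" where
  "M_weighting_on_coords V E T =
     Inl ` T \<union> Inr ` {{u, w} | u w. u \<in> T \<and> w \<in> fin_closed_nbhd V E T \<and> E u w}"

lemma finite_M_weighting_on_coords: "finite T \<Longrightarrow> finite (M_weighting_on_coords V E T)"
proof -
  assume "finite T"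
  have "{{u, w} | u w. u \<in> T \<and> w \<in> fin_closed_nbhd V E T \<and> E u w}
      \<subseteq> (\<lambda>(u, w). {u, w}) ` (T \<times> fin_closed_nbhd V E T)"
    by auto
  then have "finite {{u, w} | u w. u \<in> T \<and> w \<in> fin_closed_nbhd V E T \<and> E u w}"
    by (rule finite_subset) (simp add: \<open>finite T\<close> finite_fin_closed_nbhd)
  then show ?thesis
    unfolding M_weighting_on_coords_def using \<open>finite T\<close> by simp
qed

lemma M_weighting_on_determined:
  "determined_by (M_weighting_on_coords V E T)
     (\<lambda>x. M_weighting_on V E Lv Le T (x \<circ> Inl) (x \<circ> Inr))"
  unfolding determined_by_def M_weighting_on_coords_def
proof (intro allI impI)
  fix x y :: "'a + 'a set \<Rightarrow> nat"
  assume agree: "\<forall>i \<in> Inl ` T \<union> Inr ` {{u, w} | u w. u \<in> T \<and> w \<in> fin_closed_nbhd V E T \<and> E u w}.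
    x i = y i"
  have "wdeg V E (x \<circ> Inl) (x \<circ> Inr) u = wdeg V E (y \<circ> Inl) (y \<circ> Inr) u"
    if u: "u \<in> T" "finite (nbhd V E u)" for u
  proof (rule wdeg_cong)
    show "(x \<circ> Inl) u = (y \<circ> Inl) u"
      using u agree by simp
    fix w assume "w \<in> nbhd V E u"
    then have "{u, w} \<in> {{u, w} | u w. u \<in> T \<and> w \<in> fin_closed_nbhd V E T \<and> E u w}"
      using u nbhd_subset_fin_closed_nbhd[OF u] unfolding nbhd_def by blast
    then show "(x \<circ> Inr) {u, w} = (y \<circ> Inr) {u, w}"
      using agree by simp
  qed
  moreover have "\<forall>u v. u \<in> T \<and> v \<in> T \<and> E u v \<longrightarrow> x (Inr {u, v}) = y (Inr {u, v})"
    using agree subset_fin_closed_nbhd[of T V E] by blast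
  ultimately show "M_weighting_on V E Lv Le T (x \<circ> Inl) (x \<circ> Inr) =
      M_weighting_on V E Lv Le T (y \<circ> Inl) (y \<circ> Inr)"
    using agree unfolding M_weighting_on_def by auto
qed

lemma M_weighting_induced_in_lists:
  assumes "M_weighting S (induced E S) Lv Le wv we"
  shows "v \<in> S \<Longrightarrow> wv v \<in> Lv v"
    and "u \<in> S \<Longrightarrow> w \<in> S \<Longrightarrow> E u w \<Longrightarrow> we {u, w} \<in> Le {u, w}"
  using assms unfolding M_weighting_def weighting_from_def induced_def by simp_all

lemma M_weighting_induced_wdeg_neq:
  assumes "finite S" "M_weighting S (induced E S) Lv Le wv we" "induced E S u v"
  shows "wdeg S (induced E S) wv we u \<noteq> wdeg S (induced E S) wv we v"
proof -
  have "finite (nbhd S (induced E S) z)" for z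
    using assms(1) unfolding nbhd_def by simp
  moreover have "\<not> same_wdeg S (induced E S) wv we u v \<or> infinite (nbhd S (induced E S) u)"
    using assms(2,3) unfolding M_weighting_def by blast
  ultimately show ?thesis
    unfolding same_wdeg_def by blast
qed

lemma nbhd_induced_eq:
  assumes "S \<subseteq> V" "u \<in> S" "nbhd V E u \<subseteq> S"
  shows "nbhd S (induced E S) u = nbhd V E u"
  using assms unfolding nbhd_def induced_def by blast

lemma M_weighting_on_if_M_weighting_induced:
  assumes "S \<subseteq> V" "finite S" "fin_closed_nbhd V E T \<subseteq> S"
    and W: "M_weighting S (induced E S) Lv Le wv we"
  shows "M_weighting_on V E Lv Le T wv we"
  unfolding M_weighting_on_def
proof (intro conjI allI impI ballI)
  have "T \<subseteq> S"
    using assms(3) subset_fin_closed_nbhd[of T V E] by blast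
  have wdeg_eq: "wdeg S (induced E S) wv we z = wdeg V E wv we z"
    if "z \<in> T" "finite (nbhd V E z)" for z
    using nbhd_induced_eq[OF assms(1)] \<open>T \<subseteq> S\<close> assms(3) nbhd_subset_fin_closed_nbhd[OF that]
      that(1) unfolding wdeg_def by auto
  fix u v
  show "wv v \<in> Lv v" if "v \<in> T"
    using M_weighting_induced_in_lists(1)[OF W] that \<open>T \<subseteq> S\<close> by blast
  show "we {u, v} \<in> Le {u, v}" if "u \<in> T \<and> v \<in> T \<and> E u v"
    using M_weighting_induced_in_lists(2)[OF W] that \<open>T \<subseteq> S\<close> by blast
  assume uv: "u \<in> T \<and> v \<in> T \<and> E u v \<and> finite (nbhd V E u) \<and> finite (nbhd V E v)"
  then have "induced E S u v"
    using \<open>T \<subseteq> S\<close> unfolding induced_def by blast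
  then have "wdeg S (induced E S) wv we u \<noteq> wdeg S (induced E S) wv we v"
    by (rule M_weighting_induced_wdeg_neq[OF assms(2) W])
  then show "wdeg V E wv we u \<noteq> wdeg V E wv we v"
    using uv wdeg_eq by simp
qed

lemma M_weighting_if_M_weighting_on_all_finite:
  assumes "simple_graph V E"
    and "\<forall>v\<in>V. 0 \<notin> Lv v" and "\<forall>u v. E u v \<longrightarrow> 0 \<notin> Le {u, v}"
    and "\<And>T. finite T \<Longrightarrow> T \<subseteq> V \<Longrightarrow> M_weighting_on V E Lv Le T wv we"
  shows "M_weighting V E Lv Le wv we"
  unfolding M_weighting_def weighting_from_def
proof (intro conjI allI impI ballI)
  fix v assume "v \<in> V"
  then show "wv v \<in> Lv v"
    using assms(4)[of "{v}"] unfolding M_weighting_on_def by simp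
  then show "wv v > 0"
    using assms(2) \<open>v \<in> V\<close> by (metis gr0I)
next
  fix u v assume "E u v"
  then have uv: "M_weighting_on V E Lv Le {u, v} wv we"
    using assms(1,4) unfolding simple_graph_def by simp
  then show "we {u, v} \<in> Le {u, v}"
    using \<open>E u v\<close> unfolding M_weighting_on_def by blast
  then show "we {u, v} > 0"
    using assms(3) \<open>E u v\<close> by (metis gr0I)
  show "\<not> same_wdeg V E wv we u v \<or>
      infinite (nbhd V E u) \<and> infinite (nbhd V E v) \<and> nbhd V E u \<approx> nbhd V E v"
    using uv \<open>E u v\<close> unfolding M_weighting_on_def same_wdeg_def by blast
qed

lemma is_K2_card: "is_K2 S R \<Longrightarrow> card S = 2"
  unfolding is_K2_def by auto

lemma non_K2_finite_superset:
  assumes "simple_graph V E" "\<not> has_isolated_edge V E" "finite T" "T \<subseteq> V"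
  obtains S where "T \<subseteq> S" "S \<subseteq> V" "finite S" "\<not> is_K2 S (induced E S)"
proof (cases "is_K2 T (induced E T)")
  case True
  then obtain a b where ab: "T = {a, b}" "E a b"
    unfolding is_K2_def induced_def by blast
  then obtain w where "w \<in> V" "w \<noteq> a" "w \<noteq> b" "E a w \<or> E b w"
    using assms(1,2) unfolding has_isolated_edge_def simple_graph_def nbhd_def by blast
  then have "card {a, b, w} = 3"
    using ab assms(1) unfolding simple_graph_def by auto
  then show ?thesis
    using that[of "{a, b, w}"] ab \<open>w \<in> V\<close> assms(4) is_K2_card by fastforce
qed (use that assms in blast)

lemma exists_bounded_M_weighting_on:
  assumes "simple_graph V E" "\<not> has_isolated_edge V E"
    and "\<forall>v \<in> V. Lv v \<subseteq> {1..k}" and "\<forall>u v. E u v \<longrightarrow> Le {u, v} \<subseteq> {1..k}"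
    and "\<forall>S. S \<subseteq> V \<and> finite S \<and> \<not> is_K2 S (induced E S) \<longrightarrow>
           (\<exists>wv we. M_weighting S (induced E S) Lv Le wv we)"
    and "finite T" "T \<subseteq> V"
  shows "\<exists>x. (\<forall>i. x i \<in> {..k}) \<and> M_weighting_on V E Lv Le T (x \<circ> Inl) (x \<circ> Inr)"
proof -
  let ?N = "fin_closed_nbhd V E T"
  have "finite ?N" "?N \<subseteq> V"
    using assms(6,7) by (simp_all add: finite_fin_closed_nbhd fin_closed_nbhd_subset)
  then obtain S where S: "?N \<subseteq> S" "S \<subseteq> V" "finite S" "\<not> is_K2 S (induced E S)"
    by (rule non_K2_finite_superset[OF assms(1,2)])
  then obtain wv we where W: "M_weighting S (induced E S) Lv Le wv we"
    using assms(5) by blast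
  have "T \<subseteq> S"
    using S(1) subset_fin_closed_nbhd[of T V E] by blast
  define y where "y = case_sum wv we"
  \<comment> \<open>Clipping at k does not change the coordinates that M_weighting_on T depends on.\<close>
  define x where "x = (\<lambda>i. min k (y i))"
  have "M_weighting_on V E Lv Le T (y \<circ> Inl) (y \<circ> Inr)"
    using M_weighting_on_if_M_weighting_induced[OF S(2,3,1) W] by (simp add: y_def comp_def)
  moreover have "M_weighting_on V E Lv Le T (x \<circ> Inl) (x \<circ> Inr) =
      M_weighting_on V E Lv Le T (y \<circ> Inl) (y \<circ> Inr)"
  proof (rule determined_byD[OF M_weighting_on_determined])
    fix i assume "i \<in> M_weighting_on_coords V E T"
    then consider (vertex) v where "i = Inl v" "v \<in> T"
      | (edge) u w where "i = Inr {u, w}" "u \<in> T" "w \<in> ?N" "E u w"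
      unfolding M_weighting_on_coords_def by blast
    then have "y i \<in> {1..k}"
    proof cases
      case vertex
      then have "wv v \<in> Lv v" "v \<in> V"
        using M_weighting_induced_in_lists(1)[OF W] \<open>T \<subseteq> S\<close> S(2) by blast+
      then have "wv v \<in> {1..k}"
        using assms(3) by blast
      then show ?thesis
        using vertex unfolding y_def by simp
    next
      case edge
      then have "we {u, w} \<in> Le {u, w}"
        using M_weighting_induced_in_lists(2)[OF W] \<open>T \<subseteq> S\<close> S(1) by blast
      then have "we {u, w} \<in> {1..k}"
        using assms(4) edge(4) by blast
      then show ?thesis
        using edge unfolding y_def by simp
    qed
    then show "x i = y i"
      unfolding x_def by simp
  qed
  moreover have "\<forall>i. x i \<in> {..k}"
    unfolding x_def by simp
  ultimately show ?thesis
    by auto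
qed

theorem theorem5:
  fixes V :: "'a set" and E :: "'a \<Rightarrow> 'a \<Rightarrow> bool"
    and Lv :: "'a \<Rightarrow> nat set" and Le :: "'a set \<Rightarrow> nat set" and k :: nat
  assumes "simple_graph V E"
    and "\<not> has_isolated_edge V E"
    and "\<forall>v \<in> V. Lv v \<subseteq> {1..k}"
    and "\<forall>u v. E u v \<longrightarrow> Le {u, v} \<subseteq> {1..k}"
    and "\<forall>S. S \<subseteq> V \<and> finite S \<and> \<not> is_K2 S (induced E S) \<longrightarrow>
           (\<exists>wv we. M_weighting S (induced E S) Lv Le wv we)"
  shows "\<exists>wv we. M_weighting V E Lv Le wv we"
proof -
  let ?J = "{T. finite T \<and> T \<subseteq> V}"
  let ?C = "\<lambda>T x. M_weighting_on V E Lv Le T (x \<circ> Inl) (x \<circ> Inr)"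
  have "\<exists>x. (\<forall>i. x i \<in> {..k}) \<and> (\<forall>T\<in>?J. ?C T x)"
  proof (rule finite_domain_constraints_compactness)
    show "\<exists>K. finite K \<and> determined_by K (?C T)" if "T \<in> ?J" for T
      using that by (intro exI[of _ "M_weighting_on_coords V E T"] conjI
          finite_M_weighting_on_coords M_weighting_on_determined) auto
    show "\<exists>x. (\<forall>i. x i \<in> {..k}) \<and> (\<forall>T\<in>F. ?C T x)" if "finite F" "F \<subseteq> ?J" for F
    proof -
      have "finite (\<Union>F)" "\<Union>F \<subseteq> V"
        using that by auto
      then obtain x where "\<forall>i. x i \<in> {..k}" "?C (\<Union>F) x"
        using exists_bounded_M_weighting_on[OF assms] by blast
      moreover have "?C T x" if "T \<in> F" for T
        using M_weighting_on_mono[OF Union_upper[OF that] \<open>?C (\<Union>F) x\<close>] .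
      ultimately show ?thesis
        by blast
    qed
  qed simp
  then obtain x where "\<forall>T\<in>?J. ?C T x"
    by blast
  moreover have "\<forall>v\<in>V. 0 \<notin> Lv v"
    using assms(3) by fastforce
  moreover have "\<forall>u v. E u v \<longrightarrow> 0 \<notin> Le {u, v}"
    using assms(4) by fastforce
  ultimately show ?thesis
    using M_weighting_if_M_weighting_on_all_finite[OF assms(1)] by blast
qed

end
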